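(* Let $\mathcal{Q}\subset\mathcal{E}$ be a smooth embedded submanifold with projection function $\Pi$ for $T\mathcal{Q}$, and embed $T^*\mathcal{Q}=\{(q,p): q\in\mathcal{Q},\ \Pi(q)^{T}p=p\}\subset\mathcal{E}^2$. Fix $(q,p)\in T^*\mathcal{Q}$. For $(h_q,h_p)\in\mathcal{E}^2$ set $$e_q=\Pi(q)h_p,\qquad e_p=\Pi'(q;e_q)^{T}p-\Pi(q)^{T}\big\{h_q+\{X\mapsto\Pi'(q;X)^{T}p\}^{T}h_p\big\}.$$ Then $(e_q,e_p)\in T_{(q,p)}T^*\mathcal{Q}$ and for all $(\xi_q,\xi_p)\in T_{(q,p)}T^*\mathcal{Q}$, $$h_q\cdot\xi_q+h_p\cdot\xi_p=e_q\cdot\xi_p-e_p\cdot\xi_q=\Omega\big((e_q,e_p),(\xi_q,\xi_p)\big).$$ Restricted to $T^*_{(q,p)}T^*\mathcal{Q}=\{(s_q,s_p):\Pi(q)^{T}s_q=s_q,\ \Pi(q)s_p=s_p\}$, the map $(h_q,h_p)\mapsto(e_q,e_p)$ is a bijection onto $T_{(q,p)}T^*\mathcal{Q}$ with inverse $(e_q,e_p)\mapsto(-\Pi(q)^{T}e_p,\ e_q)$; consequently $\Omega$ is nondegenerate on $T_{(q,p)}T^*\mathcal{Q}$ and $(e_q,e_p)$ is the unique element of $T_{(q,p)}T^*\mathcal{Q}$ satisfying the displayed identity. Hence, for a smooth function $H$ on $T^*\mathcal{Q}$ extended smoothly to a neighborhood in $\mathcal{E}^2$ with partial gradients $(H_q,H_p)$,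 the unique vector field $X_H$ on $T^*\mathcal{Q}$ with $\Omega(X_H,Y)=D_YH$ for all vector fields $Y$ on $T^*\mathcal{Q}$ is $$X_H(q,p)=\Big(\Pi(q)H_p,\ \ \Pi'(q;\Pi(q)H_p)^{T}p-\Pi(q)^{T}\big\{H_q+\{X\mapsto\Pi'(q;X)^{T}p\}^{T}H_p\big\}\Big).$$
   Context: $\mathcal{E}$ is a finite-dimensional real inner product space (inner product $a\cdot b$, adjoint $A^{T}$). A projection function for $T\mathcal{Q}$ is a smooth map $\Pi:\mathcal{Q}\to\mathrm{Lin}(\mathcal{E},\mathcal{E})$ with $\Pi(q)^2=\Pi(q)$ and $\mathrm{Im}\,\Pi(q)=T_q\mathcal{Q}$; $\Pi'(q;\xi)$ is its directional derivative. The tangent space of the embedded cotangent bundle is $T_{(q,p)}T^*\mathcal{Q}=\{(\Delta_q,\Delta_p)\in T_q\mathcal{Q}\times\mathcal{E}:\ \Delta_p=\Pi(q)^{T}\Delta_p+\Pi'(q;\Delta_q)^{T}p\}$. The Poincaré 2-form is $\Omega((a,b),(c,d))=a\cdot d-b\cdot c$ (restricted to $T T^*\mathcal{Q}$). Index-raising notation: $\{X\mapsto\Pi'(q;X)^{T}p\}^{T}h$ denotes the unique $\Phi\in T_q\mathcal{Q}$ with $\Delta\cdot\Phi=h\cdot\Pi'(q;\Delta)^{T}p$ for all $\Delta\in T_q\mathcal{Q}$. *)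

theory Defs
  imports "HOL-Analysis.Analysis"
begin

text \<open>For finite-dimensional domains this is exactly C-infinity on open U.\<close>
coinductive smooth_on :: "'a::real_normed_vector set \<Rightarrow> ('a \<Rightarrow> 'b::real_normed_vector) \<Rightarrow> bool"
  for U where
  "(\<forall>x\<in>U. g differentiable (at x)) \<Longrightarrow>
   (\<forall>v. smooth_on U (\<lambda>x. frechet_derivative g (at x) v)) \<Longrightarrow> smooth_on U g"

definition embedded_submanifold :: "'a::euclidean_space set \<Rightarrow> bool" where
  "embedded_submanifold Q \<longleftrightarrow>
     (\<forall>q\<in>Q. \<exists>U V (\<phi>::'a \<Rightarrow> 'a) \<psi> L.
        open U \<and> q \<in> U \<and> open V \<and> subspace L \<and>
        smooth_on U \<phi> \<and> smooth_on V \<psi> \<and> \<phi> ` U = V \<and>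
        (\<forall>x\<in>U. \<psi> (\<phi> x) = x) \<and> \<phi> ` (Q \<inter> U) = V \<inter> L)"

definition tangent_space :: "'a::euclidean_space set \<Rightarrow> 'a \<Rightarrow> 'a set" where
  "tangent_space Q q = {v. \<exists>(\<gamma>::real \<Rightarrow> 'a) \<epsilon>. \<epsilon> > 0 \<and> smooth_on (ball 0 \<epsilon>) \<gamma> \<and>
       \<gamma> ` ball 0 \<epsilon> \<subseteq> Q \<and> \<gamma> 0 = q \<and> (\<gamma> has_vector_derivative v) (at 0)}"

definition transp :: "('a::euclidean_space \<Rightarrow>\<^sub>L 'a) \<Rightarrow> 'a \<Rightarrow> 'a" where
  "transp A = adjoint (blinfun_apply A)"

text \<open>A projection function for TQ: smooth (given as a smooth map on an open
  neighbourhood of Q, i.e. a smooth extension of a smooth map on Q), with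
  Pi(q) idempotent and Im Pi(q) = T_q Q for q in Q.\<close>
definition projection_function :: "'a::euclidean_space set \<Rightarrow> ('a \<Rightarrow> ('a \<Rightarrow>\<^sub>L 'a)) \<Rightarrow> bool" where
  "projection_function Q Pr \<longleftrightarrow>
     (\<exists>U. open U \<and> Q \<subseteq> U \<and> smooth_on U Pr) \<and>
     (\<forall>q\<in>Q. Pr q o\<^sub>L Pr q = Pr q \<and> range (blinfun_apply (Pr q)) = tangent_space Q q)"

definition dPi :: "('a::euclidean_space \<Rightarrow> ('a \<Rightarrow>\<^sub>L 'a)) \<Rightarrow> 'a \<Rightarrow> 'a \<Rightarrow> ('a \<Rightarrow>\<^sub>L 'a)" where
  "dPi Pr q \<xi> = frechet_derivative Pr (at q) \<xi>"

text \<open>Index raising: {X |-> Pi'(q;X)^T p}^T h is the unique Phi in T_q Q with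
  Delta . Phi = h . Pi'(q;Delta)^T p for all Delta in T_q Q.\<close>
definition raise :: "'a::euclidean_space set \<Rightarrow> ('a \<Rightarrow> ('a \<Rightarrow>\<^sub>L 'a)) \<Rightarrow> 'a \<Rightarrow> 'a \<Rightarrow> 'a \<Rightarrow> 'a" where
  "raise Q Pr q p h = (THE \<Phi>. \<Phi> \<in> tangent_space Q q \<and>
      (\<forall>\<Delta>\<in>tangent_space Q q. \<Delta> \<bullet> \<Phi> = h \<bullet> transp (dPi Pr q \<Delta>) p))"

definition cotangent_bundle :: "'a::euclidean_space set \<Rightarrow> ('a \<Rightarrow> ('a \<Rightarrow>\<^sub>L 'a)) \<Rightarrow> ('a \<times> 'a) set" where
  "cotangent_bundle Q Pr = {(q, p). q \<in> Q \<and> transp (Pr q) p = p}"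

definition TTstar :: "'a::euclidean_space set \<Rightarrow> ('a \<Rightarrow> ('a \<Rightarrow>\<^sub>L 'a)) \<Rightarrow> 'a \<Rightarrow> 'a \<Rightarrow> ('a \<times> 'a) set" where
  "TTstar Q Pr q p = {(dq, dp). dq \<in> tangent_space Q q \<and>
      dp = transp (Pr q) dp + transp (dPi Pr q dq) p}"

definition TstarTstar :: "('a::euclidean_space \<Rightarrow> ('a \<Rightarrow>\<^sub>L 'a)) \<Rightarrow> 'a \<Rightarrow> ('a \<times> 'a) set" where
  "TstarTstar Pr q = {(sq, sp). transp (Pr q) sq = sq \<and> Pr q sp = sp}"

definition Omega :: "('a::real_inner \<times> 'a) \<Rightarrow> ('a \<times> 'a) \<Rightarrow> real" where
  "Omega v w = fst v \<bullet> snd w - snd v \<bullet> fst w"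

definition emap :: "'a::euclidean_space set \<Rightarrow> ('a \<Rightarrow> ('a \<Rightarrow>\<^sub>L 'a)) \<Rightarrow> 'a \<Rightarrow> 'a \<Rightarrow> ('a \<times> 'a) \<Rightarrow> ('a \<times> 'a)" where
  "emap Q Pr q p h =
     (let eq = Pr q (snd h)
      in (eq, transp (dPi Pr q eq) p - transp (Pr q) (fst h + raise Q Pr q p (snd h))))"

definition grad_q :: "('a::euclidean_space \<times> 'a \<Rightarrow> real) \<Rightarrow> 'a \<times> 'a \<Rightarrow> 'a" where
  "grad_q H z = (THE g. \<forall>v. frechet_derivative H (at z) (v, 0) = g \<bullet> v)"

definition grad_p :: "('a::euclidean_space \<times> 'a \<Rightarrow> real) \<Rightarrow> 'a \<times> 'a \<Rightarrow> 'a" where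
  "grad_p H z = (THE g. \<forall>v. frechet_derivative H (at z) (0, v) = g \<bullet> v)"

end

theory Submission
  imports Defs
begin

text \<open>Differentiating \<open>\<Pi>(\<gamma> t)\<^sup>2 = \<Pi>(\<gamma> t)\<close> along a curve in \<open>Q\<close> gives
  \<open>\<Pi> \<Pi>'(a) + \<Pi>'(a) \<Pi> = \<Pi>'(a)\<close> for tangent \<open>a\<close>, hence \<open>\<Pi> \<Pi>'(a) \<Pi> = 0\<close>, so a covector
  \<open>p = \<Pi>\<^sup>T p\<close> satisfies \<open>p \<bullet> \<Pi>'(a) b = 0\<close> for all tangent \<open>a\<close>, \<open>b\<close>.  With this
  vanishing, the identity \<open>h\<^sub>q \<bullet> \<xi>\<^sub>q + h\<^sub>p \<bullet> \<xi>\<^sub>p = \<Omega>(e, \<xi>)\<close> and the two-sided inverse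
  \<open>e \<mapsto> (-\<Pi>\<^sup>T e\<^sub>p, e\<^sub>q)\<close> are direct computations.  Nondegeneracy of \<open>\<Omega>\<close> follows by testing
  against \<open>e(\<Pi>\<^sup>T v\<^sub>q, 0)\<close> and \<open>e(0, \<Pi> v\<^sub>p)\<close>, and uniqueness of the Hamiltonian vector field
  follows pointwise, since a vector field may be modified at a single point.\<close>

lemma inner_eq_leftI: "(\<And>x. x \<bullet> y = x \<bullet> z) \<Longrightarrow> (y::'a::real_inner) = z"
  using vector_eq_ldot by blast

lemma inner_transp_right: "x \<bullet> transp A y = A x \<bullet> y"
  unfolding transp_def
  by (rule adjoint_works) (simp add: bounded_linear.linear blinfun.bounded_linear_right)

lemma inner_transp_left: "transp A y \<bullet> x = y \<bullet> A x"
  by (simp add: inner_commute inner_transp_right)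

lemma linear_transp: "linear (transp A)"
  unfolding transp_def
  by (rule adjoint_linear) (simp add: bounded_linear.linear blinfun.bounded_linear_right)

lemma transp_zero: "transp 0 y = 0"
  by (rule inner_eq_leftI) (simp add: inner_transp_right)

lemma transp_idem:
  fixes A :: "'a::euclidean_space \<Rightarrow>\<^sub>L 'a"
  assumes "\<And>x. A (A x) = A x"
  shows "transp A (transp A y) = transp A y"
  by (rule inner_eq_leftI) (simp add: inner_transp_right assms)

lemma riesz_representative:
  fixes f :: "'a::euclidean_space \<Rightarrow> real"
  assumes "linear f"
  shows "f v = (THE g. \<forall>v. f v = g \<bullet> v) \<bullet> v"
proof -
  have ex: "\<forall>v. f v = adjoint f 1 \<bullet> v"
    using adjoint_works[OF assms] by (simp add: inner_commute)
  have "\<forall>v. f v = (THE g. \<forall>v. f v = g \<bullet> v) \<bullet> v"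
  proof (rule theI[of _ "adjoint f 1"])
    fix g assume "\<forall>v. f v = g \<bullet> v"
    then show "g = adjoint f 1"
      using ex vector_eq_rdot by force
  qed (rule ex)
  then show ?thesis by blast
qed

lemma smooth_on_differentiable: "smooth_on U g \<Longrightarrow> x \<in> U \<Longrightarrow> g differentiable (at x)"
  by (erule smooth_on.cases) auto

lemma projection_function_has_derivative:
  assumes "projection_function Q Pr" and "q \<in> Q"
  shows "(Pr has_derivative dPi Pr q) (at q)"
proof -
  obtain U where "Q \<subseteq> U" "smooth_on U Pr"
    using assms(1) unfolding projection_function_def by blast
  then have "Pr differentiable (at q)"
    using assms(2) smooth_on_differentiable by blast
  then show ?thesis
    unfolding frechet_derivative_works dPi_def by (simp add: eta_contract_eq)
qed

lemma projection_function_derivative_split: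
  assumes proj: "projection_function Q Pr" and "q \<in> Q" and a: "a \<in> tangent_space Q q"
  shows "(Pr q o\<^sub>L dPi Pr q a) + (dPi Pr q a o\<^sub>L Pr q) = dPi Pr q a"
proof -
  obtain \<gamma> :: "real \<Rightarrow> 'a" and \<epsilon> where \<gamma>: "\<epsilon> > 0" "\<gamma> ` ball 0 \<epsilon> \<subseteq> Q" "\<gamma> 0 = q"
      "(\<gamma> has_vector_derivative a) (at 0)"
    using a unfolding tangent_space_def by blast
  have "(Pr \<circ> \<gamma> has_derivative dPi Pr q \<circ> (\<lambda>t. t *\<^sub>R a)) (at 0)"
    using \<gamma>(3,4) projection_function_has_derivative[OF proj assms(2)]
    by (intro diff_chain_at) (simp_all add: has_vector_derivative_def)
  then have curve: "((\<lambda>t. Pr (\<gamma> t)) has_derivative (\<lambda>t. dPi Pr q (t *\<^sub>R a))) (at 0)"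
    by (simp add: o_def)
  have idem: "Pr (\<gamma> t) o\<^sub>L Pr (\<gamma> t) = Pr (\<gamma> t)" if "t \<in> ball 0 \<epsilon>" for t
    using proj \<gamma>(2) that unfolding projection_function_def by blast
  have "((\<lambda>t. Pr (\<gamma> t)) has_derivative
      (\<lambda>t. (Pr q o\<^sub>L dPi Pr q (t *\<^sub>R a)) + (dPi Pr q (t *\<^sub>R a) o\<^sub>L Pr q))) (at 0)"
  proof (rule has_derivative_transform_within_open[where s="ball 0 \<epsilon>"])
    show "((\<lambda>t. Pr (\<gamma> t) o\<^sub>L Pr (\<gamma> t)) has_derivative
        (\<lambda>t. (Pr q o\<^sub>L dPi Pr q (t *\<^sub>R a)) + (dPi Pr q (t *\<^sub>R a) o\<^sub>L Pr q))) (at 0)"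
      using bounded_bilinear.FDERIV[OF bounded_bilinear_blinfun_compose curve curve] \<gamma>(3) by simp
  qed (use \<gamma>(1) idem in auto)
  from fun_cong[OF has_derivative_unique[OF this curve], of 1] show ?thesis
    by simp
qed

lemma emap_pair:
  "emap Q Pr q p (a, b) = (Pr q b, transp (dPi Pr q (Pr q b)) p - transp (Pr q) (a + raise Q Pr q p b))"
  by (simp add: emap_def Let_def)

locale cotangent_point =
  fixes Q :: "'a::euclidean_space set" and Pr :: "'a \<Rightarrow> ('a \<Rightarrow>\<^sub>L 'a)" and q p :: 'a
  assumes proj: "projection_function Q Pr" and base: "q \<in> Q" and covector: "transp (Pr q) p = p"
begin

abbreviation "P \<equiv> Pr q"
abbreviation "T \<equiv> tangent_space Q q"
abbreviation "D \<equiv> dPi Pr q"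

lemma P_idem: "P (P x) = P x"
  using proj base unfolding projection_function_def by (metis blinfun_apply_blinfun_compose)

lemma transp_P_idem: "transp P (transp P x) = transp P x"
  by (rule transp_idem) (rule P_idem)

lemma tangent_space_eq_range: "T = range (blinfun_apply P)"
  using proj base unfolding projection_function_def by blast

lemma tangent_space_iff: "x \<in> T \<longleftrightarrow> P x = x"
proof
  assume "x \<in> T"
  then obtain y where "x = P y" unfolding tangent_space_eq_range by blast
  then show "P x = x" by (simp add: P_idem)
qed (unfold tangent_space_eq_range, metis rangeI)

lemma subspace_tangent_space: "subspace T"
  unfolding tangent_space_eq_range
  by (simp add: linear_subspace_image bounded_linear.linear blinfun.bounded_linear_right)

lemma bounded_linear_D: "bounded_linear D"
  using projection_function_has_derivative[OF proj base] has_derivative_bounded_linear by blast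

lemma transp_D_diff: "transp (D (a - b)) p = transp (D a) p - transp (D b) p"
  by (rule inner_eq_leftI)
     (simp add: inner_transp_right linear_diff[OF bounded_linear.linear[OF bounded_linear_D]]
       blinfun.diff_left inner_diff_left inner_diff_right)

lemma covector_D_tangent:
  assumes "a \<in> T" "b \<in> T"
  shows "p \<bullet> D a b = 0"
proof -
  have "P (D a (P x)) + D a (P (P x)) = D a (P x)" for x
    using arg_cong[OF projection_function_derivative_split[OF proj base assms(1)],
        of "\<lambda>A. blinfun_apply A (P x)"]
    by (simp add: blinfun.add_left)
  then have "P (D a (P b)) = 0"
    by (simp add: P_idem)
  moreover have "p \<bullet> D a b = transp P p \<bullet> D a (P b)"
    using covector assms(2) tangent_space_iff by simp
  ultimately show ?thesis
    by (simp add: inner_transp_left)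
qed

lemma raise_char:
  "raise Q Pr q p h \<in> T \<and> (\<forall>\<Delta>\<in>T. \<Delta> \<bullet> raise Q Pr q p h = h \<bullet> transp (D \<Delta>) p)"
  unfolding raise_def
proof (rule theI')
  define g where "g = (THE g. \<forall>\<Delta>. D \<Delta> h \<bullet> p = g \<bullet> \<Delta>)"
  have "linear (\<lambda>\<Delta>. D \<Delta> h \<bullet> p)"
    using bounded_linear.linear[OF bounded_linear_D]
    by (intro linearI) (simp_all add: linear_add linear_scale blinfun.add_left
        blinfun.scaleR_left inner_add_left)
  then have g: "D \<Delta> h \<bullet> p = g \<bullet> \<Delta>" for \<Delta>
    unfolding g_def by (rule riesz_representative)
  \<comment> \<open>The representer is the orthogonal projection onto \<open>T\<close> of the Riesz vector \<open>g\<close>.\<close>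
  obtain y z where yz: "y \<in> span T" "\<And>w. w \<in> span T \<Longrightarrow> orthogonal z w" "g = y + z"
    using orthogonal_subspace_decomp_exists by blast
  have y_represents: "\<Delta> \<bullet> y = h \<bullet> transp (D \<Delta>) p" if "\<Delta> \<in> T" for \<Delta>
    using yz(2)[OF span_base[OF that]] g[of \<Delta>] yz(3)
    by (simp add: orthogonal_def inner_add_right inner_commute inner_transp_right)
  have y_tangent: "y \<in> T"
    using yz(1) span_eq_iff subspace_tangent_space by blast
  show "\<exists>!\<Phi>. \<Phi> \<in> T \<and> (\<forall>\<Delta>\<in>T. \<Delta> \<bullet> \<Phi> = h \<bullet> transp (D \<Delta>) p)"
  proof (rule ex1I[of _ y])
    show "y \<in> T \<and> (\<forall>\<Delta>\<in>T. \<Delta> \<bullet> y = h \<bullet> transp (D \<Delta>) p)"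
      using y_tangent y_represents by blast
  next
    fix x assume x: "x \<in> T \<and> (\<forall>\<Delta>\<in>T. \<Delta> \<bullet> x = h \<bullet> transp (D \<Delta>) p)"
    then have "x - y \<in> T"
      using y_tangent subspace_tangent_space subspace_diff by blast
    then have "(x - y) \<bullet> (x - y) = 0"
      using x y_represents by (simp add: inner_diff_right)
    then show "x = y" by simp
  qed
qed

lemma raise_tangent:
  assumes "a \<in> T"
  shows "raise Q Pr q p a = 0"
proof -
  let ?F = "raise Q Pr q p a"
  have "?F \<in> T" using raise_char by blast
  then have "?F \<bullet> ?F = p \<bullet> D ?F a"
    using raise_char by (simp add: inner_transp_right inner_commute)
  then show ?thesis
    using covector_D_tangent[OF \<open>?F \<in> T\<close> assms] by simp
qed

lemma emap_fst: "fst (emap Q Pr q p h) = P (snd h)"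
  by (cases h) (simp add: emap_pair)

lemma emap_snd:
  "snd (emap Q Pr q p h) = transp (D (P (snd h))) p - transp P (fst h + raise Q Pr q p (snd h))"
  by (cases h) (simp add: emap_pair)

lemma TTstar_iff:
  "\<xi> \<in> TTstar Q Pr q p \<longleftrightarrow> fst \<xi> \<in> T \<and> snd \<xi> = transp P (snd \<xi>) + transp (D (fst \<xi>)) p"
  by (cases \<xi>) (simp add: TTstar_def)

lemma emap_in_TTstar: "emap Q Pr q p h \<in> TTstar Q Pr q p"
proof -
  let ?u = "P (snd h)"
  have u: "?u \<in> T" using tangent_space_iff P_idem by simp
  have "snd (emap Q Pr q p h) = transp P (snd (emap Q Pr q p h)) + transp (D ?u) p"
  proof (rule inner_eq_leftI)
    fix x
    have "D ?u (P x) \<bullet> p = 0"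
      using covector_D_tangent[OF u, of "P x"] tangent_space_iff P_idem by (simp add: inner_commute)
    then show "x \<bullet> snd (emap Q Pr q p h)
        = x \<bullet> (transp P (snd (emap Q Pr q p h)) + transp (D ?u) p)"
      by (simp add: emap_snd inner_transp_right inner_diff_right inner_add_right P_idem)
  qed
  with u show ?thesis
    by (simp add: TTstar_iff emap_fst)
qed

lemma emap_symplectic:
  assumes "\<xi> \<in> TTstar Q Pr q p"
  shows "fst h \<bullet> fst \<xi> + snd h \<bullet> snd \<xi> = Omega (emap Q Pr q p h) \<xi>"
proof -
  obtain a b where \<xi>: "\<xi> = (a, b)" by (cases \<xi>)
  have a: "a \<in> T" and b: "transp P b = b - transp (D a) p"
    using assms \<xi> TTstar_iff by (auto simp: algebra_simps)
  let ?u = "P (snd h)" and ?F = "raise Q Pr q p (snd h)"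
  have "?u \<bullet> b = snd h \<bullet> b - snd h \<bullet> transp (D a) p"
    using b by (simp flip: inner_transp_right add: inner_diff_right)
  moreover have "?F \<bullet> a = snd h \<bullet> transp (D a) p"
    using raise_char a by (simp add: inner_commute)
  moreover have "p \<bullet> D ?u a = 0"
    using covector_D_tangent[OF _ a, of ?u] P_idem tangent_space_iff by simp
  moreover have "snd (emap Q Pr q p h) \<bullet> a = p \<bullet> D ?u a - fst h \<bullet> a - ?F \<bullet> a"
    using a tangent_space_iff
    by (simp add: emap_snd inner_diff_left inner_transp_left inner_add_left)
  ultimately show ?thesis
    using \<xi> by (simp add: Omega_def emap_fst)
qed

lemma emap_inverse_in_TstarTstar:
  assumes "e \<in> TTstar Q Pr q p"
  shows "(- transp P (snd e), fst e) \<in> TstarTstar Pr q"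
proof -
  have "P (fst e) = fst e"
    using assms TTstar_iff tangent_space_iff by blast
  then show ?thesis
    by (simp add: TstarTstar_def transp_P_idem linear_neg[OF linear_transp])
qed

lemma emap_emap_inverse:
  assumes "e \<in> TTstar Q Pr q p"
  shows "emap Q Pr q p (- transp P (snd e), fst e) = e"
proof -
  have a: "fst e \<in> T" and b: "snd e = transp P (snd e) + transp (D (fst e)) p"
    using assms TTstar_iff by auto
  then have "P (fst e) = fst e" using tangent_space_iff by simp
  moreover from b have "transp (D (fst e)) p + transp P (snd e) = snd e"
    by (simp add: add.commute)
  ultimately show ?thesis
    using a
    by (simp add: prod_eq_iff emap_fst emap_snd raise_tangent transp_P_idem
        linear_neg[OF linear_transp])
qed

lemma emap_inverse_emap:
  assumes "h \<in> TstarTstar Pr q"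
  shows "(- transp P (snd (emap Q Pr q p h)), fst (emap Q Pr q p h)) = h"
proof -
  obtain a b where h: "h = (a, b)" by (cases h)
  have a: "transp P a = a" and b: "P b = b"
    using assms h by (auto simp: TstarTstar_def)
  then have bT: "b \<in> T" using tangent_space_iff by simp
  have "transp P (transp (D b) p) = 0"
    by (rule inner_eq_leftI)
       (simp add: inner_transp_right covector_D_tangent[OF bT] inner_commute tangent_space_iff P_idem)
  then show ?thesis
    using h a b by (simp add: emap_fst emap_snd raise_tangent[OF bT] linear_diff[OF linear_transp])
qed

lemma bij_betw_emap: "bij_betw (emap Q Pr q p) (TstarTstar Pr q) (TTstar Q Pr q p)"
  by (rule bij_betw_byWitness[where f'="\<lambda>e. (- transp P (snd e), fst e)"])
     (simp_all add: emap_inverse_emap emap_emap_inverse emap_in_TTstar emap_inverse_in_TstarTstar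
       image_subset_iff)

lemma Omega_nondegenerate:
  assumes v: "v \<in> TTstar Q Pr q p" and null: "\<forall>w\<in>TTstar Q Pr q p. Omega v w = 0"
  shows "v = 0"
proof -
  have a: "fst v \<in> T" and b: "snd v = transp P (snd v) + transp (D (fst v)) p"
    using v TTstar_iff by auto
  have test: "fst k \<bullet> fst v + snd k \<bullet> snd v = 0" if "k \<in> TstarTstar Pr q" for k
    using emap_symplectic[OF v, of k] null emap_in_TTstar
    by (simp add: Omega_def inner_commute)
  have "(transp P (fst v), 0) \<in> TstarTstar Pr q"
    by (simp add: TstarTstar_def transp_P_idem)
  from test[OF this] have q0: "fst v = 0"
    using a tangent_space_iff by (simp add: inner_transp_left)
  have "(0, P (snd v)) \<in> TstarTstar Pr q"
    by (simp add: TstarTstar_def P_idem linear_0[OF linear_transp])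
  from test[OF this] have "snd v \<bullet> transp P (snd v) = 0"
    by (simp add: inner_transp_right)
  moreover have "transp P (snd v) = snd v"
    using b q0 linear_0[OF bounded_linear.linear[OF bounded_linear_D]] by (simp add: transp_zero)
  ultimately show ?thesis
    using q0 by (simp add: prod_eq_iff)
qed

lemma TTstar_diff:
  assumes "v \<in> TTstar Q Pr q p" "w \<in> TTstar Q Pr q p"
  shows "v - w \<in> TTstar Q Pr q p"
  using assms subspace_diff[OF subspace_tangent_space]
  by (simp add: TTstar_iff transp_D_diff linear_diff[OF linear_transp]) (metis add_diff_add)

lemma emap_unique:
  assumes v: "v \<in> TTstar Q Pr q p"
    and "\<forall>\<xi>\<in>TTstar Q Pr q p. fst h \<bullet> fst \<xi> + snd h \<bullet> snd \<xi> = Omega v \<xi>"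
  shows "v = emap Q Pr q p h"
proof -
  have "Omega (v - emap Q Pr q p h) w = 0" if "w \<in> TTstar Q Pr q p" for w
    using assms(2) that emap_symplectic[OF that, of h] by (simp add: Omega_def inner_diff_left)
  then show ?thesis
    using Omega_nondegenerate[OF TTstar_diff[OF v emap_in_TTstar]] by simp
qed

end

lemma cotangent_pointI:
  "projection_function Q Pr \<Longrightarrow> (q, p) \<in> cotangent_bundle Q Pr \<Longrightarrow> cotangent_point Q Pr q p"
  by unfold_locales (auto simp: cotangent_bundle_def)

lemma frechet_derivative_partial_gradients:
  fixes H :: "'a::euclidean_space \<times> 'a \<Rightarrow> real"
  assumes "H differentiable (at z)"
  shows "frechet_derivative H (at z) y = grad_q H z \<bullet> fst y + grad_p H z \<bullet> snd y"
proof -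
  let ?L = "frechet_derivative H (at z)"
  have L: "bounded_linear ?L"
    using assms frechet_derivative_works has_derivative_bounded_linear by blast
  have "bounded_linear (\<lambda>v. ?L (v, 0))" "bounded_linear (\<lambda>v. ?L (0, v))"
    by (intro bounded_linear_compose[OF L] bounded_linear_Pair bounded_linear_ident
        bounded_linear_zero)+
  then have "linear (\<lambda>v. ?L (v, 0))" "linear (\<lambda>v. ?L (0, v))"
    by (simp_all add: bounded_linear.linear)
  then have "?L (fst y, 0) = grad_q H z \<bullet> fst y" "?L (0, snd y) = grad_p H z \<bullet> snd y"
    unfolding grad_q_def grad_p_def by (simp_all add: riesz_representative[symmetric])
  moreover have "?L y = ?L (fst y, 0) + ?L (0, snd y)"
    using linear_add[OF bounded_linear.linear[OF L], of "(fst y, 0)" "(0, snd y)"] by simp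
  ultimately show ?thesis by simp
qed

lemma hamiltonian_vector_field_iff:
  fixes H :: "'a::euclidean_space \<times> 'a \<Rightarrow> real"
  assumes proj: "projection_function Q Pr"
    and H: "\<forall>z\<in>cotangent_bundle Q Pr. H differentiable (at z)"
    and X: "\<forall>(q, p)\<in>cotangent_bundle Q Pr. X (q, p) \<in> TTstar Q Pr q p"
  shows "(\<forall>Y. (\<forall>(q, p)\<in>cotangent_bundle Q Pr. Y (q, p) \<in> TTstar Q Pr q p) \<longrightarrow>
            (\<forall>z\<in>cotangent_bundle Q Pr. Omega (X z) (Y z) = frechet_derivative H (at z) (Y z)))
     \<longleftrightarrow> (\<forall>(q, p)\<in>cotangent_bundle Q Pr.
            X (q, p) = (Pr q (grad_p H (q, p)),
              transp (dPi Pr q (Pr q (grad_p H (q, p)))) p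
              - transp (Pr q) (grad_q H (q, p) + raise Q Pr q p (grad_p H (q, p)))))"
    (is "(\<forall>Y. ?field Y \<longrightarrow> ?hamiltonian Y) \<longleftrightarrow> _")
proof -
  have "(\<forall>Y. ?field Y \<longrightarrow> ?hamiltonian Y) \<longleftrightarrow> (\<forall>(q, p)\<in>cotangent_bundle Q Pr.
            X (q, p) = emap Q Pr q p (grad_q H (q, p), grad_p H (q, p)))"
    (is "_ \<longleftrightarrow> ?formula")
  proof
    assume L: "\<forall>Y. ?field Y \<longrightarrow> ?hamiltonian Y"
    show ?formula
    proof (clarify)
      fix q p assume z: "(q, p) \<in> cotangent_bundle Q Pr"
      interpret cotangent_point Q Pr q p using cotangent_pointI[OF proj z] .
      let ?g = "(grad_q H (q, p), grad_p H (q, p))"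
      have "fst ?g \<bullet> fst \<xi> + snd ?g \<bullet> snd \<xi> = Omega (X (q, p)) \<xi>"
        if \<xi>: "\<xi> \<in> TTstar Q Pr q p" for \<xi>
      proof -
        have "?field (X((q, p) := \<xi>))"
          using X \<xi> by auto
        then have "Omega (X (q, p)) \<xi> = frechet_derivative H (at (q, p)) \<xi>"
          using L z by fastforce
        then show ?thesis
          using frechet_derivative_partial_gradients[of H "(q, p)" \<xi>] H z by simp
      qed
      moreover have "X (q, p) \<in> TTstar Q Pr q p"
        using X z by blast
      ultimately show "X (q, p) = emap Q Pr q p ?g"
        by (simp add: emap_unique)
    qed
  next
    assume R: ?formula
    show "\<forall>Y. ?field Y \<longrightarrow> ?hamiltonian Y"
    proof (intro allI impI ballI)
      fix Y z assume Y: "?field Y" and z: "z \<in> cotangent_bundle Q Pr"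
      obtain q p where zqp: "z = (q, p)" by (cases z)
      interpret cotangent_point Q Pr q p using cotangent_pointI[OF proj] z zqp by simp
      have "Y z \<in> TTstar Q Pr q p" and "X z = emap Q Pr q p (grad_q H z, grad_p H z)"
        using Y R z zqp by auto
      then show "Omega (X z) (Y z) = frechet_derivative H (at z) (Y z)"
        using emap_symplectic[of "Y z" "(grad_q H z, grad_p H z)"]
          frechet_derivative_partial_gradients[of H z "Y z"] H z by simp
    qed
  qed
  then show ?thesis
    by (simp only: emap_pair)
qed

theorem mainTheorem6:
  fixes Q :: "'a::euclidean_space set" and Pr :: "'a \<Rightarrow> ('a \<Rightarrow>\<^sub>L 'a)" and q p :: 'a
  assumes "embedded_submanifold Q"
    and "projection_function Q Pr"
    and "(q, p) \<in> cotangent_bundle Q Pr"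
  shows "(\<forall>h. emap Q Pr q p h \<in> TTstar Q Pr q p \<and>
            (\<forall>\<xi>\<in>TTstar Q Pr q p.
               fst h \<bullet> fst \<xi> + snd h \<bullet> snd \<xi>
                 = fst (emap Q Pr q p h) \<bullet> snd \<xi> - snd (emap Q Pr q p h) \<bullet> fst \<xi>
             \<and> fst (emap Q Pr q p h) \<bullet> snd \<xi> - snd (emap Q Pr q p h) \<bullet> fst \<xi>
                 = Omega (emap Q Pr q p h) \<xi>))
   \<and> bij_betw (emap Q Pr q p) (TstarTstar Pr q) (TTstar Q Pr q p)
   \<and> (\<forall>e\<in>TTstar Q Pr q p. (- transp (Pr q) (snd e), fst e) \<in> TstarTstar Pr q
         \<and> emap Q Pr q p (- transp (Pr q) (snd e), fst e) = e)
   \<and> (\<forall>h\<in>TstarTstar Pr q. (- transp (Pr q) (snd (emap Q Pr q p h)), fst (emap Q Pr q p h)) = h)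
   \<and> (\<forall>v\<in>TTstar Q Pr q p. (\<forall>w\<in>TTstar Q Pr q p. Omega v w = 0) \<longrightarrow> v = 0)
   \<and> (\<forall>h. \<forall>v\<in>TTstar Q Pr q p.
         (\<forall>\<xi>\<in>TTstar Q Pr q p. fst h \<bullet> fst \<xi> + snd h \<bullet> snd \<xi> = Omega v \<xi>)
           \<longrightarrow> v = emap Q Pr q p h)
   \<and> (\<forall>(H :: 'a \<times> 'a \<Rightarrow> real) W (X :: 'a \<times> 'a \<Rightarrow> 'a \<times> 'a).
         open W \<and> cotangent_bundle Q Pr \<subseteq> W \<and> smooth_on W H \<and>
         (\<forall>(q', p')\<in>cotangent_bundle Q Pr. X (q', p') \<in> TTstar Q Pr q' p')
         \<longrightarrow>
         ((\<forall>Y. (\<forall>(q', p')\<in>cotangent_bundle Q Pr. Y (q', p') \<in> TTstar Q Pr q' p') \<longrightarrow>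
               (\<forall>z\<in>cotangent_bundle Q Pr. Omega (X z) (Y z) = frechet_derivative H (at z) (Y z)))
          \<longleftrightarrow>
          (\<forall>(q', p')\<in>cotangent_bundle Q Pr.
              X (q', p') = (Pr q' (grad_p H (q', p')),
                 transp (dPi Pr q' (Pr q' (grad_p H (q', p')))) p'
                 - transp (Pr q') (grad_q H (q', p') + raise Q Pr q' p' (grad_p H (q', p')))))))"
proof -
  interpret cotangent_point Q Pr q p
    using cotangent_pointI[OF assms(2,3)] .
  show ?thesis
  proof (intro conjI, goal_cases)
    case 7
    show ?case
      by (intro allI impI, elim conjE, rule hamiltonian_vector_field_iff[OF assms(2)])
         (use smooth_on_differentiable in blast)+
  qed (use emap_in_TTstar emap_symplectic bij_betw_emap emap_inverse_in_TstarTstar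
      emap_emap_inverse emap_inverse_emap Omega_nondegenerate emap_unique in
      \<open>simp_all add: Omega_def\<close>)
qed

end
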